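(* For every $\alpha\in\Lambda$, the $*$-representation $\pi_\alpha$ of $W$ on $H_\alpha$ is irreducible.
   Context: Fix $d\ge 2$ and complex numbers $q_{ij}$, $1\le i\ne j\le d$, with $|q_{ij}|<1$ and $q_{ij}=\overline{q_{ji}}$. Let $W$ be the universal $C^*$-algebra generated by $s_1,\dots,s_d$ subject to $s_i^*s_i=I$ and $s_i^*s_j=q_{ij}s_js_i^*$ for $i\ne j$. Let $\Lambda_m=\{1,\dots,d\}^m$ ($\Lambda_0=\{\emptyset\}$), $\Lambda^0=\bigcup_m\Lambda_m$, $\Lambda=\{1,\dots,d\}^{\mathbb N}$; $s_\alpha=s_{\alpha_1}\cdots s_{\alpha_m}$, $s_\emptyset=I$. Shifts: $\sigma(\beta_1,\beta_2,\dots)=(\beta_2,\dots)$, $\sigma_j(\beta_1,\beta_2,\dots)=(j,\beta_1,\beta_2,\dots)$. $\beta\sim\alpha$ means $\sigma^m(\beta)=\sigma^n(\alpha)$ for some $m,n\ge0$. Fock representation: $\pi_F$ on $\mathcal F$ with unit vector $\Omega$, $\pi_F(s_j)^*\Omega=0$, and $\pi_F(s_\gamma)\Omega$, $\gamma\in\Lambda^0$, spanning a dense subspace. For $\gamma,\beta\in\Lambda_m$, $q(\gamma,\beta)=\langle\pi_F(s_\gamma)^*\pi_F(s_\beta)\Omega,\Omega\rangle$; for infinite $\gamma,\beta$, $q(\gamma,\beta)=\lim_m q((\gamma_1,\dots,\gamma_m),(\beta_1,\dots,\beta_m))$. $H_\alpha$ is the Hilbert space completion of the span of formal vectors $e_\beta$,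 $\beta\sim\alpha$, with respect to the positive form $(e_\beta,e_\gamma)=q(\gamma,\beta)$. The representation $\pi_\alpha$ of $W$ on $H_\alpha$ is given by $\pi_\alpha(s_j)e_\beta=e_{\sigma_j(\beta)}$, and $\pi_\alpha(s_j)^*e_\beta=0$ if $\beta$ does not contain $j$, $\pi_\alpha(s_j)^*e_\beta=q(j,\beta)e_{\beta\setminus j}$ otherwise, where for $\beta=(\beta'j\beta'')$ with $\beta'=(\beta'_1,\dots,\beta'_r)$ not containing $j$, $q(j,\beta)=q_{j\beta'_1}\cdots q_{j\beta'_r}$ and $\beta\setminus j=(\beta'\beta'')$. *)

theory Defs
  imports "HOL-Analysis.Analysis"
begin

definition inf_words :: "nat \<Rightarrow> (nat \<Rightarrow> nat) set" where
  "inf_words d = {\<beta>. \<forall>k. \<beta> k \<in> {1..d}}"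

definition shift :: "(nat \<Rightarrow> nat) \<Rightarrow> (nat \<Rightarrow> nat)" where
  "shift \<beta> = (\<lambda>k. \<beta> (Suc k))"

definition shift_in :: "nat \<Rightarrow> (nat \<Rightarrow> nat) \<Rightarrow> (nat \<Rightarrow> nat)" where
  "shift_in j \<beta> = (\<lambda>k. if k = 0 then j else \<beta> (k - 1))"

definition tail_equiv :: "(nat \<Rightarrow> nat) \<Rightarrow> (nat \<Rightarrow> nat) \<Rightarrow> bool" where
  "tail_equiv \<beta> \<alpha> \<longleftrightarrow> (\<exists>m n. (shift ^^ m) \<beta> = (shift ^^ n) \<alpha>)"

fun qone :: "(nat \<Rightarrow> nat \<Rightarrow> complex) \<Rightarrow> nat \<Rightarrow> nat list \<Rightarrow> complex" where
  "qone qq j [] = 1"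
| "qone qq j (b # \<beta>) = (if b = j then 1 else qq j b * qone qq j \<beta>)"

text \<open>q(\<gamma>,\<beta>) = \<langle>\<pi>_F(s_\<gamma>)^* \<pi>_F(s_\<beta>)\<Omega>,\<Omega>\<rangle> for finite words, as forced by the relations
 s_j^* s_j = I, s_j^* s_b = q_{jb} s_b s_j^* (b \<noteq> j) and s_j^*\<Omega> = 0:
 s_j^* s_\<beta>\<Omega> = q(j,\<beta>) s_{\<beta>\j}\<Omega> if j occurs in \<beta>, and 0 otherwise.\<close>
fun qfin :: "(nat \<Rightarrow> nat \<Rightarrow> complex) \<Rightarrow> nat list \<Rightarrow> nat list \<Rightarrow> complex" where
  "qfin qq [] [] = 1"
| "qfin qq [] (b # \<beta>) = 0"
| "qfin qq (j # \<gamma>) \<beta> =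
     (if j \<in> set \<beta> then qone qq j \<beta> * qfin qq \<gamma> (remove1 j \<beta>) else 0)"

definition prefix :: "nat \<Rightarrow> (nat \<Rightarrow> nat) \<Rightarrow> nat list" where
  "prefix m \<beta> = map \<beta> [0..<m]"

definition qinf :: "(nat \<Rightarrow> nat \<Rightarrow> complex) \<Rightarrow> (nat \<Rightarrow> nat) \<Rightarrow> (nat \<Rightarrow> nat) \<Rightarrow> complex" where
  "qinf qq \<gamma> \<beta> = lim (\<lambda>m. qfin qq (prefix m \<gamma>) (prefix m \<beta>))"

definition contains :: "nat \<Rightarrow> (nat \<Rightarrow> nat) \<Rightarrow> bool" where
  "contains j \<beta> \<longleftrightarrow> (\<exists>k. \<beta> k = j)"

definition first_occ :: "nat \<Rightarrow> (nat \<Rightarrow> nat) \<Rightarrow> nat" where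
  "first_occ j \<beta> = (LEAST k. \<beta> k = j)"

definition qone_inf :: "(nat \<Rightarrow> nat \<Rightarrow> complex) \<Rightarrow> nat \<Rightarrow> (nat \<Rightarrow> nat) \<Rightarrow> complex" where
  "qone_inf qq j \<beta> = (\<Prod>i<first_occ j \<beta>. qq j (\<beta> i))"

definition remove_first :: "nat \<Rightarrow> (nat \<Rightarrow> nat) \<Rightarrow> (nat \<Rightarrow> nat)" where
  "remove_first j \<beta> = (\<lambda>n. if n < first_occ j \<beta> then \<beta> n else \<beta> (Suc n))"

text \<open>A complex Hilbert space is encoded as a real Hilbert space ('h :: {real_inner, complete_space})
together with a real-linear orthogonal map J with J(J x) = -x (multiplication by i).\<close>
definition complex_structure :: "('h::real_inner \<Rightarrow> 'h) \<Rightarrow> bool" where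
  "complex_structure J \<longleftrightarrow> linear J \<and> (\<forall>x. J (J x) = - x) \<and> (\<forall>x y. inner (J x) (J y) = inner x y)"

definition cscale :: "('h::real_vector \<Rightarrow> 'h) \<Rightarrow> complex \<Rightarrow> 'h \<Rightarrow> 'h" where
  "cscale J c x = Re c *\<^sub>R x + Im c *\<^sub>R J x"

text \<open>Complex inner product, linear in the first and conjugate-linear in the second argument.\<close>
definition cinner :: "('h::real_inner \<Rightarrow> 'h) \<Rightarrow> 'h \<Rightarrow> 'h \<Rightarrow> complex" where
  "cinner J x y = Complex (inner x y) (inner x (J y))"

definition closed_csubspace :: "('h::real_inner \<Rightarrow> 'h) \<Rightarrow> 'h set \<Rightarrow> bool" where
  "closed_csubspace J K \<longleftrightarrow> subspace K \<and> closed K \<and> J ` K \<subseteq> K"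

definition bounded_clinear :: "('h::real_inner \<Rightarrow> 'h) \<Rightarrow> ('h \<Rightarrow> 'h) \<Rightarrow> bool" where
  "bounded_clinear J T \<longleftrightarrow> bounded_linear T \<and> (\<forall>x. T (J x) = J (T x))"

definition cspan :: "('h::real_inner \<Rightarrow> 'h) \<Rightarrow> 'h set \<Rightarrow> 'h set" where
  "cspan J A = span (A \<union> J ` A)"

end

theory Submission
  imports Defs
begin

text \<open>Since T_j is the adjoint of S_j (which comes down to a recursion for the coefficients q(\<gamma>, \<beta>)),
  the orthogonal complement of an invariant closed subspace K is invariant as well. The operators
  V_n = \<pi>_\<alpha>(s_(\<alpha>_1 ... \<alpha>_n)) \<pi>_\<alpha>(s_(\<alpha>_1 ... \<alpha>_n))^* fix e_\<alpha> and preserve K and its complement, so they fix the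
  component of e_\<alpha> in K. A vector fixed by all V_n is a multiple of e_\<alpha>: deleting \<alpha>_1, ..., \<alpha>_n from
  \<gamma> one letter at a time either eventually just shifts \<gamma> onto a tail of \<alpha>, or every mismatch costs a
  factor max |q_ij| < 1 and the coefficient of V_n e_\<gamma> tends to 0. Hence e_\<alpha> lies in K or in its complement.
  Finally e_\<alpha> is cyclic: the adjoints take it to every e_(\<sigma>^n \<alpha>), and the S_j rebuild from these every
  e_\<gamma> with \<gamma> \<sim> \<alpha>.\<close>

section \<open>Orthogonal decomposition in real Hilbert spaces\<close>

lemma closed_orthogonal_comp: "closed (W\<^sup>\<bottom>)"
proof -
  have "W\<^sup>\<bottom> = (\<Inter>y\<in>W. {x. inner y x = 0})"
    by (auto simp: orthogonal_comp_def orthogonal_def)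
  then show ?thesis
    by (simp add: closed_INT closed_Collect_eq continuous_on_inner continuous_on_const continuous_on_id)
qed

lemma adjoint_maps_orthogonal_comp:
  assumes adj: "\<And>x y. inner (A x) y = inner x (B y)" and AK: "A ` K \<subseteq> K"
  shows "B ` (K\<^sup>\<bottom>) \<subseteq> K\<^sup>\<bottom>"
proof
  fix z assume "z \<in> B ` (K\<^sup>\<bottom>)"
  then obtain x where x: "x \<in> K\<^sup>\<bottom>" "z = B x" by blast
  have "inner k (B x) = 0" if "k \<in> K" for k
    using x(1) AK that by (auto simp: orthogonal_comp_def orthogonal_def adj[symmetric])
  then show "z \<in> K\<^sup>\<bottom>" using x(2) by (simp add: orthogonal_comp_def orthogonal_def)
qed

lemma norm_diff_le_parallelogram:
  fixes x :: "'a::real_inner"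
  assumes "subspace K" "x \<in> K" "y \<in> K" and \<delta>: "0 \<le> \<delta>" "\<And>k. k \<in> K \<Longrightarrow> \<delta> \<le> norm (v - k)"
  shows "norm (x - y) ^ 2 \<le> 2 * norm (v - x) ^ 2 + 2 * norm (v - y) ^ 2 - 4 * \<delta> ^ 2"
proof -
  have "norm (p - r) ^ 2 + norm (p + r) ^ 2 = 2 * norm p ^ 2 + 2 * norm r ^ 2" for p r :: 'a
    by (simp add: power2_norm_eq_inner inner_add_left inner_add_right inner_diff_left
        inner_diff_right inner_commute)
  from this[of "v - x" "v - y"]
  have parallelogram: "norm (x - y) ^ 2 + norm ((v - x) + (v - y)) ^ 2
      = 2 * norm (v - x) ^ 2 + 2 * norm (v - y) ^ 2"
    by (simp add: norm_minus_commute)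
  have "(1/2) *\<^sub>R (x + y) \<in> K" using assms by (simp add: subspace_add subspace_scale)
  then have "2 * \<delta> \<le> 2 * norm (v - (1/2) *\<^sub>R (x + y))" using \<delta> by simp
  also have "2 * norm (v - (1/2) *\<^sub>R (x + y)) = norm ((v - x) + (v - y))"
  proof -
    have "(v - x) + (v - y) = 2 *\<^sub>R (v - (1/2) *\<^sub>R (x + y))" by (simp add: algebra_simps scaleR_2)
    then show ?thesis by simp
  qed
  finally have "(2 * \<delta>) ^ 2 \<le> norm ((v - x) + (v - y)) ^ 2" using \<delta> by (intro power_mono) auto
  then show ?thesis using parallelogram by (simp add: power_mult_distrib)
qed

lemma minimizing_sequence_Cauchy:
  fixes k :: "nat \<Rightarrow> 'a::real_inner"
  assumes sub: "subspace K" and kK: "\<And>n. k n \<in> K"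
    and \<delta>: "0 \<le> \<delta>" "\<And>x. x \<in> K \<Longrightarrow> \<delta> \<le> norm (v - x)"
    and lim: "(\<lambda>n. norm (v - k n)) \<longlonglongrightarrow> \<delta>"
  shows "Cauchy k"
proof (rule CauchyI)
  fix r :: real assume r: "0 < r"
  have "(\<lambda>n. norm (v - k n) ^ 2) \<longlonglongrightarrow> \<delta> ^ 2" using lim by (intro tendsto_intros)
  moreover have "\<delta> ^ 2 < \<delta> ^ 2 + r ^ 2 / 4" using r by simp
  ultimately have "\<forall>\<^sub>F n in sequentially. norm (v - k n) ^ 2 < \<delta> ^ 2 + r ^ 2 / 4"
    by (rule order_tendstoD)
  then obtain M where M: "\<And>n. M \<le> n \<Longrightarrow> norm (v - k n) ^ 2 < \<delta> ^ 2 + r ^ 2 / 4"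
    unfolding eventually_sequentially by blast
  show "\<exists>M. \<forall>m\<ge>M. \<forall>n\<ge>M. norm (k m - k n) < r"
  proof (intro exI allI impI)
    fix m n assume "M \<le> m" "M \<le> n"
    then have "norm (k m - k n) ^ 2 < r ^ 2"
      using norm_diff_le_parallelogram[OF sub kK kK \<delta>, of m n] M[of m] M[of n] by linarith
    then show "norm (k m - k n) < r" using r by (simp add: power_less_imp_less_base)
  qed
qed

lemma closed_subspace_nearest_point:
  fixes K :: "'a::{real_inner,complete_space} set"
  assumes sub: "subspace K" and cl: "closed K"
  obtains a where "a \<in> K" "\<And>x. x \<in> K \<Longrightarrow> norm (v - a) \<le> norm (v - x)"
proof -
  define \<delta> where "\<delta> = infdist v K"
  have Kne: "K \<noteq> {}" using sub subspace_0 by blast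
  have \<delta>0: "0 \<le> \<delta>" unfolding \<delta>_def by (rule infdist_nonneg)
  have \<delta>_le: "\<delta> \<le> norm (v - x)" if "x \<in> K" for x
    using infdist_le[OF that, of v] unfolding \<delta>_def by (simp add: dist_norm)
  have "\<exists>x\<in>K. norm (v - x) < \<delta> + inverse (real (Suc n))" for n
  proof -
    have "(INF x\<in>K. dist v x) < \<delta> + inverse (real (Suc n))"
      using infdist_notempty[OF Kne, of v] unfolding \<delta>_def by simp
    then obtain x where "x \<in> K" "dist v x < \<delta> + inverse (real (Suc n))"
      using cINF_less_iff[OF Kne, of "dist v"] by auto
    then show ?thesis by (auto simp: dist_norm)
  qed
  then obtain k where kK: "\<And>n. k n \<in> K"
    and k\<delta>: "\<And>n. norm (v - k n) < \<delta> + inverse (real (Suc n))"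
    by metis
  have lim: "(\<lambda>n. norm (v - k n)) \<longlonglongrightarrow> \<delta>"
  proof (rule tendsto_sandwich[OF _ _ tendsto_const LIMSEQ_inverse_real_of_nat_add])
    show "\<forall>\<^sub>F n in sequentially. \<delta> \<le> norm (v - k n)" using \<delta>_le kK by simp
    show "\<forall>\<^sub>F n in sequentially. norm (v - k n) \<le> \<delta> + inverse (real (Suc n))"
      using k\<delta> by (simp add: less_imp_le)
  qed
  obtain a where ka: "k \<longlonglongrightarrow> a"
    using Cauchy_convergent[OF minimizing_sequence_Cauchy[OF sub kK \<delta>0 \<delta>_le lim]]
    unfolding convergent_def by blast
  have "(\<lambda>n. norm (v - k n)) \<longlonglongrightarrow> norm (v - a)" by (intro tendsto_intros ka)
  then have "norm (v - a) = \<delta>" using lim by (rule LIMSEQ_unique)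
  then show thesis using that closed_sequentially[OF cl kK ka] \<delta>_le by simp
qed

lemma nearest_point_orthogonal:
  assumes sub: "subspace K" and aK: "a \<in> K" and near: "\<And>k. k \<in> K \<Longrightarrow> norm (v - a) \<le> norm (v - k)"
  shows "v - a \<in> K\<^sup>\<bottom>"
  unfolding orthogonal_comp_def orthogonal_def
proof (intro CollectI ballI)
  fix c assume cK: "c \<in> K"
  define w where "w = v - a"
  define x where "x = inner c w"
  show "inner c (v - a) = 0"
  proof (cases "c = 0")
    case False
    define s where "s = inner c c"
    have s: "0 < s" using False unfolding s_def by simp
    \<comment> \<open>moving a along c by x / s would shorten v - a by x^2 / s\<close>
    have "a + (x / s) *\<^sub>R c \<in> K" using sub aK cK by (simp add: subspace_add subspace_scale)
    then have "norm w \<le> norm (w - (x / s) *\<^sub>R c)"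
      using near unfolding w_def by (simp add: diff_diff_eq)
    then have "norm w ^ 2 \<le> norm (w - (x / s) *\<^sub>R c) ^ 2" by (simp add: power_mono)
    also have "\<dots> = inner w w - 2 * (x / s) * x + (x / s) * (x / s) * s"
      unfolding power2_norm_eq_inner x_def s_def
      by (simp add: inner_diff_left inner_diff_right inner_commute[of w c] algebra_simps)
    also have "\<dots> = norm w ^ 2 - x * x / s"
      using s by (simp add: power2_norm_eq_inner field_simps)
    finally have "x * x / s \<le> 0" by simp
    then show ?thesis using s unfolding x_def w_def by (auto simp: divide_le_0_iff mult_le_0_iff)
  qed simp
qed

lemma orthogonal_decomposition:
  fixes K :: "'a::{real_inner,complete_space} set"
  assumes "subspace K" "closed K"
  obtains a where "a \<in> K" "v - a \<in> K\<^sup>\<bottom>"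
proof -
  obtain a where "a \<in> K" "\<And>k. k \<in> K \<Longrightarrow> norm (v - a) \<le> norm (v - k)"
    using closed_subspace_nearest_point[OF assms, of v] by blast
  then show thesis using that nearest_point_orthogonal[OF assms(1)] by blast
qed

lemma orthogonal_decomposition_unique:
  assumes "subspace K" "a \<in> K" "a' \<in> K" "b \<in> K\<^sup>\<bottom>" "b' \<in> K\<^sup>\<bottom>" "a + b = a' + b'"
  shows "a = a'"
proof -
  have "a - a' = b' - b" using assms(6) by (simp add: algebra_simps)
  then have "a - a' \<in> K \<inter> K\<^sup>\<bottom>"
    using subspace_diff[OF assms(1-3)] subspace_diff[OF subspace_orthogonal_comp assms(5,4)] by simp
  then show ?thesis using orthogonal_Int_0[OF assms(1)] by simp
qed

lemma closed_subspace_Collect_eq: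
  fixes f g :: "'a::real_normed_vector \<Rightarrow> real"
  assumes "bounded_linear f" "bounded_linear g"
  shows "subspace {y. f y = g y} \<and> closed {y. f y = g y}"
proof -
  interpret f: bounded_linear f by (rule assms(1))
  interpret g: bounded_linear g by (rule assms(2))
  have "subspace {y. f y = g y}" by (simp add: subspace_def f.add g.add f.scale g.scale)
  moreover have "closed {y. f y = g y}" by (intro closed_Collect_eq linear_continuous_on assms)
  ultimately show ?thesis ..
qed

section \<open>Complex Hilbert spaces given by a complex structure\<close>

lemma cinner_Re [simp]: "Re (cinner J x y) = inner x y"
  and cinner_Im [simp]: "Im (cinner J x y) = inner x (J y)"
  by (simp_all add: cinner_def)

lemma cinner_zero_left [simp]: "cinner J 0 y = 0"
  by (simp add: complex_eq_iff)

lemma cscale_0 [simp]: "cscale J 0 x = 0"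
  and cscale_1 [simp]: "cscale J 1 x = x"
  by (simp_all add: cscale_def)

lemma cinner_diff_left: "cinner J (x - y) z = cinner J x z - cinner J y z"
  by (simp add: complex_eq_iff inner_diff_left)

lemma bounded_clinear_id: "bounded_clinear J id"
  by (simp add: bounded_clinear_def bounded_linear_ident id_def)

lemma bounded_clinear_comp:
  "bounded_clinear J f \<Longrightarrow> bounded_clinear J g \<Longrightarrow> bounded_clinear J (f \<circ> g)"
  by (simp add: bounded_clinear_def bounded_linear_compose o_def)

lemma bounded_clinear_cscale:
  "bounded_clinear J f \<Longrightarrow> f (cscale J c x) = cscale J c (f x)"
  unfolding bounded_clinear_def cscale_def
  by (simp add: linear_add[OF bounded_linear.linear] linear_cmul[OF bounded_linear.linear])

lemma subspace_cscale: "subspace K \<Longrightarrow> J ` K \<subseteq> K \<Longrightarrow> x \<in> K \<Longrightarrow> cscale J c x \<in> K"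
  unfolding cscale_def by (intro subspace_add subspace_scale) auto

locale complex_hilbert =
  fixes J :: "'h::real_inner \<Rightarrow> 'h"
  assumes complex_J: "complex_structure J"
begin

lemma J_J [simp]: "J (J x) = - x"
  and inner_J_J [simp]: "inner (J x) (J y) = inner x y"
  and linear_J: "linear J"
  using complex_J by (simp_all add: complex_structure_def)

lemma J_add: "J (x + y) = J x + J y" using linear_J by (rule linear_add)
lemma J_0 [simp]: "J 0 = 0" using linear_J by (rule linear_0)
lemma J_scaleR: "J (r *\<^sub>R x) = r *\<^sub>R J x" using linear_J by (rule linear_cmul)

lemma inner_J_left: "inner (J x) y = - inner x (J y)"
  using inner_J_J[of x "J y"] by simp

lemma cscale_zero [simp]: "cscale J c 0 = 0"
  by (simp add: cscale_def)

lemma norm_J [simp]: "norm (J x) = norm x"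
  by (simp add: norm_eq_sqrt_inner)

lemma cinner_cscale_left: "cinner J (cscale J c x) y = c * cinner J x y"
  by (simp add: complex_eq_iff cscale_def inner_add_left inner_J_left)

lemma cinner_cscale_right: "cinner J x (cscale J c y) = cnj c * cinner J x y"
  by (simp add: complex_eq_iff cscale_def inner_add_right inner_diff_right J_add J_scaleR)

lemma cscale_cscale: "cscale J a (cscale J b x) = cscale J (a * b) x"
  by (simp add: cscale_def J_add J_scaleR algebra_simps scaleR_add_left scaleR_diff_left)

lemma norm_cinner_le: "cmod (cinner J x y) \<le> 2 * norm x * norm y"
proof -
  have "cmod (cinner J x y) \<le> \<bar>inner x y\<bar> + \<bar>inner x (J y)\<bar>"
    using cmod_le[of "cinner J x y"] by simp
  also have "\<dots> \<le> norm x * norm y + norm x * norm (J y)"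
    by (intro add_mono Cauchy_Schwarz_ineq2)
  finally show ?thesis by simp
qed

lemma cinner_adjoint:
  assumes "\<And>x y. inner (A x) y = inner x (B y)" "\<And>x. B (J x) = J (B x)"
  shows "cinner J (A x) y = cinner J x (B y)"
  using assms by (simp add: complex_eq_iff)

lemma orthogonal_comp_J:
  assumes "J ` K \<subseteq> K" shows "J ` (K\<^sup>\<bottom>) \<subseteq> K\<^sup>\<bottom>"
proof -
  have "(\<lambda>x. - J x) ` (K\<^sup>\<bottom>) \<subseteq> K\<^sup>\<bottom>"
    by (rule adjoint_maps_orthogonal_comp[OF _ assms]) (simp add: inner_J_left)
  then show ?thesis using subspace_neg[OF subspace_orthogonal_comp] by force
qed

end

section \<open>Infinite words\<close>

lemma funpow_shift: "(shift ^^ k) b = (\<lambda>i. b (i + k))"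
  by (induction k) (auto simp: shift_def)

lemma shift_in_0 [simp]: "shift_in j b 0 = j"
  and shift_in_Suc [simp]: "shift_in j b (Suc n) = b n"
  and shift_shift_in [simp]: "shift (shift_in j b) = b"
  by (simp_all add: shift_in_def shift_def)

lemma shift_in_funpow_shift: "shift_in (b k) ((shift ^^ Suc k) b) = (shift ^^ k) b"
  unfolding funpow_shift shift_in_def by (auto simp: fun_eq_iff gr0_conv_Suc)

lemma tail_equiv_iff: "tail_equiv \<beta> \<alpha> \<longleftrightarrow> (\<exists>m n. \<forall>i. \<beta> (i + m) = \<alpha> (i + n))"
  unfolding tail_equiv_def funpow_shift by (simp add: fun_eq_iff)

lemma tail_equiv_funpow_shift_eq:
  assumes "(shift ^^ p) \<gamma> = (shift ^^ q) \<beta>" "tail_equiv \<beta> \<alpha>"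
  shows "tail_equiv \<gamma> \<alpha>"
proof -
  have \<gamma>: "\<gamma> (i + p) = \<beta> (i + q)" for i using assms(1) by (simp add: funpow_shift fun_eq_iff)
  obtain m n where \<beta>: "\<forall>i. \<beta> (i + m) = \<alpha> (i + n)" using assms(2) by (auto simp: tail_equiv_iff)
  have "\<gamma> (i + (m + p)) = \<alpha> (i + (q + n))" for i
  proof -
    have "\<gamma> (i + (m + p)) = \<beta> ((i + q) + m)" using \<gamma>[of "i + m"] by (simp add: ac_simps)
    also have "\<dots> = \<alpha> ((i + q) + n)" using \<beta> by blast
    finally show ?thesis by (simp add: ac_simps)
  qed
  then show ?thesis unfolding tail_equiv_iff by blast
qed

lemma tail_equiv_shift_in: "tail_equiv \<beta> \<alpha> \<Longrightarrow> tail_equiv (shift_in j \<beta>) \<alpha>"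
  by (rule tail_equiv_funpow_shift_eq[of 1 _ 0]) simp_all

lemma tail_equiv_funpow_shift: "tail_equiv \<beta> \<alpha> \<Longrightarrow> tail_equiv ((shift ^^ k) \<beta>) \<alpha>"
  by (rule tail_equiv_funpow_shift_eq[of 0 _ k]) simp_all

lemma inf_words_shift_in: "j \<in> {1..d} \<Longrightarrow> b \<in> inf_words d \<Longrightarrow> shift_in j b \<in> inf_words d"
  by (auto simp: inf_words_def shift_in_def)

lemma inf_words_funpow_shift: "b \<in> inf_words d \<Longrightarrow> (shift ^^ n) b \<in> inf_words d"
  by (auto simp: inf_words_def funpow_shift)

lemma inf_words_remove_first: "b \<in> inf_words d \<Longrightarrow> remove_first j b \<in> inf_words d"
  by (auto simp: inf_words_def remove_first_def)

lemma prefix_0 [simp]: "prefix 0 b = []"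
  by (simp add: prefix_def)

lemma prefix_Suc: "prefix (Suc n) b = b 0 # prefix n (shift b)"
  unfolding prefix_def shift_def by (rule map_upt_Suc)

lemma prefix_shift_in: "prefix (Suc n) (shift_in j b) = j # prefix n b"
  by (simp add: prefix_Suc)

lemma first_occ_in: "contains j b \<Longrightarrow> b (first_occ j b) = j"
  unfolding contains_def first_occ_def by (rule LeastI_ex)

lemma first_occ_le: "b k = j \<Longrightarrow> first_occ j b \<le> k"
  unfolding first_occ_def by (rule Least_le)

lemma before_first_occ: "i < first_occ j b \<Longrightarrow> b i \<noteq> j"
  unfolding first_occ_def using not_less_Least by blast

lemma first_occ_0: "b 0 = j \<Longrightarrow> first_occ j b = 0"
  using first_occ_le[of b 0 j] by simp

lemma contains_first_occ_0_iff: "contains j b \<and> first_occ j b = 0 \<longleftrightarrow> b 0 = j"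
proof
  assume "contains j b \<and> first_occ j b = 0"
  with first_occ_in[of j b] show "b 0 = j" by simp
next
  assume "b 0 = j"
  then have "contains j b" unfolding contains_def by (intro exI[of _ 0])
  with first_occ_0[of b j, OF \<open>b 0 = j\<close>] show "contains j b \<and> first_occ j b = 0" by simp
qed

lemma contains_shift:
  assumes "contains j b" "b 0 \<noteq> j" shows "contains j (shift b)"
proof -
  obtain k where k: "b k = j" using assms(1) by (auto simp: contains_def)
  then obtain k' where "k = Suc k'" using assms(2) by (cases k) auto
  then show ?thesis using k by (auto simp: contains_def shift_def)
qed

lemma first_occ_Suc:
  assumes "contains j b" "b 0 \<noteq> j" shows "first_occ j b = Suc (first_occ j (shift b))"
proof -
  obtain k where "b k = j" using assms(1) by (auto simp: contains_def)
  then show ?thesis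
    unfolding first_occ_def shift_def using Least_Suc[of "\<lambda>k. b k = j" k] assms(2) by simp
qed

lemma qone_inf_0: "b 0 = j \<Longrightarrow> qone_inf qq j b = 1"
  by (simp add: qone_inf_def first_occ_0)

lemma qone_inf_Suc:
  "contains j b \<Longrightarrow> b 0 \<noteq> j \<Longrightarrow> qone_inf qq j b = qq j (b 0) * qone_inf qq j (shift b)"
  using first_occ_Suc[of j b]
  by (simp add: qone_inf_def prod.lessThan_Suc_shift shift_def del: prod.lessThan_Suc)

lemma remove_first_0: "b 0 = j \<Longrightarrow> remove_first j b = shift b"
  by (simp add: remove_first_def first_occ_0 shift_def)

lemma remove_first_Suc:
  assumes "contains j b" "b 0 \<noteq> j"
  shows "remove_first j b = shift_in (b 0) (remove_first j (shift b))"
proof (rule ext)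
  fix n
  from assms show "remove_first j b n = shift_in (b 0) (remove_first j (shift b)) n"
    by (cases n) (auto simp: remove_first_def first_occ_Suc shift_def)
qed

lemma funpow_shift_remove_first:
  "(shift ^^ first_occ j b) (remove_first j b) = (shift ^^ Suc (first_occ j b)) b"
  unfolding funpow_shift remove_first_def by auto

lemma tail_equiv_remove_first: "tail_equiv \<beta> \<alpha> \<Longrightarrow> tail_equiv (remove_first j \<beta>) \<alpha>"
  by (rule tail_equiv_funpow_shift_eq[OF funpow_shift_remove_first])

lemma set_prefix_Suc_iff: "j \<in> set (prefix (Suc n) b) \<longleftrightarrow> contains j b \<and> first_occ j b \<le> n"
proof
  assume "j \<in> set (prefix (Suc n) b)"
  then obtain k where "k < Suc n" "b k = j" unfolding prefix_def by (auto simp del: upt_Suc)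
  then show "contains j b \<and> first_occ j b \<le> n"
    using first_occ_le[of b k j] by (auto simp: contains_def)
next
  assume a: "contains j b \<and> first_occ j b \<le> n"
  then have "b (first_occ j b) = j" using first_occ_in by blast
  moreover have "b (first_occ j b) \<in> b ` {0..<Suc n}" using a by auto
  ultimately show "j \<in> set (prefix (Suc n) b)" unfolding prefix_def by (simp only: set_map set_upt)
qed

lemma qone_prefix_Suc:
  "contains j b \<Longrightarrow> first_occ j b \<le> n \<Longrightarrow> qone qq j (prefix (Suc n) b) = qone_inf qq j b"
proof (induction n arbitrary: b)
  case 0
  then have "b 0 = j" using first_occ_in[OF 0(1)] by simp
  then show ?case by (simp add: prefix_Suc[of 0] qone_inf_0)
next
  case (Suc n)
  show ?case
  proof (cases "b 0 = j")
    case True then show ?thesis by (simp add: prefix_Suc[of "Suc n" b] qone_inf_0)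
  next
    case False
    then have "contains j (shift b)" "first_occ j (shift b) \<le> n"
      using contains_shift first_occ_Suc Suc.prems by auto
    then show ?thesis
      using Suc.IH False qone_inf_Suc[OF Suc.prems(1) False] by (simp add: prefix_Suc[of "Suc n" b])
  qed
qed

lemma remove1_prefix_Suc:
  "contains j b \<Longrightarrow> first_occ j b \<le> n \<Longrightarrow> remove1 j (prefix (Suc n) b) = prefix n (remove_first j b)"
proof (induction n arbitrary: b)
  case 0
  then have "b 0 = j" using first_occ_in[OF 0(1)] by simp
  then show ?case by (simp add: prefix_Suc[of 0])
next
  case (Suc n)
  show ?case
  proof (cases "b 0 = j")
    case True then show ?thesis by (simp add: prefix_Suc[of "Suc n" b] remove_first_0)
  next
    case False
    then have "contains j (shift b)" "first_occ j (shift b) \<le> n"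
      using contains_shift first_occ_Suc Suc.prems by auto
    then show ?thesis
      using Suc.IH False remove_first_Suc[OF Suc.prems(1) False]
      by (simp add: prefix_Suc[of "Suc n" b] prefix_shift_in)
  qed
qed

text \<open>strip w \<beta> k is \<beta> with the first occurrences of w_0, ..., w_(k-1) deleted in turn, and
  strip_coeff collects the coefficients q(w_i, -) met on the way (0 once a letter is missing):
  this is how the adjoint of \<pi>_\<alpha>(s_(w_0) ... s_(w_(k-1))) acts on e_\<beta>.\<close>

primrec strip :: "(nat \<Rightarrow> nat) \<Rightarrow> (nat \<Rightarrow> nat) \<Rightarrow> nat \<Rightarrow> nat \<Rightarrow> nat" where
  "strip w b 0 = b"
| "strip w b (Suc k) = remove_first (w k) (strip w b k)"

primrec strip_coeff :: "(nat \<Rightarrow> nat \<Rightarrow> complex) \<Rightarrow> (nat \<Rightarrow> nat) \<Rightarrow> (nat \<Rightarrow> nat) \<Rightarrow> nat \<Rightarrow> complex" where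
  "strip_coeff qq w b 0 = 1"
| "strip_coeff qq w b (Suc k) = strip_coeff qq w b k *
     (if contains (w k) (strip w b k) then qone_inf qq (w k) (strip w b k) else 0)"

definition strip_admissible :: "(nat \<Rightarrow> nat) \<Rightarrow> (nat \<Rightarrow> nat) \<Rightarrow> nat \<Rightarrow> bool" where
  "strip_admissible w b m \<longleftrightarrow>
     (\<forall>i<m. contains (w i) (strip w b i) \<and> first_occ (w i) (strip w b i) + i < m)"

lemma inf_words_strip: "b \<in> inf_words d \<Longrightarrow> strip w b k \<in> inf_words d"
  by (induction k) (auto simp: inf_words_remove_first)

lemma tail_equiv_strip: "tail_equiv b \<alpha> \<Longrightarrow> tail_equiv (strip w b k) \<alpha>"
  by (induction k) (auto simp: tail_equiv_remove_first)

lemma qfin_strip_window: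
  assumes "k \<le> m"
  shows "qfin qq (map w [k..<m]) (prefix (m - k) (strip w b k)) * strip_coeff qq w b k =
    (if \<forall>i. k \<le> i \<and> i < m \<longrightarrow> contains (w i) (strip w b i) \<and> first_occ (w i) (strip w b i) + i < m
     then strip_coeff qq w b m else 0)"
  using assms
proof (induction k rule: inc_induct)
  case (step k)
  let ?b = "strip w b k"
  have word: "map w [k..<m] = w k # map w [Suc k..<m]" using step.hyps by (simp add: upt_conv_Cons)
  have len: "m - k = Suc (m - Suc k)" using step.hyps by simp
  show ?case
  proof (cases "contains (w k) ?b \<and> first_occ (w k) ?b + k < m")
    case True
    then have "first_occ (w k) ?b \<le> m - Suc k" by linarith
    then have "qfin qq (map w [k..<m]) (prefix (m - k) ?b)
        = qone_inf qq (w k) ?b * qfin qq (map w [Suc k..<m]) (prefix (m - Suc k) (strip w b (Suc k)))"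
      using True by (simp add: word len set_prefix_Suc_iff qone_prefix_Suc remove1_prefix_Suc)
    moreover have "strip_coeff qq w b (Suc k) = strip_coeff qq w b k * qone_inf qq (w k) ?b"
      using True by simp
    ultimately have "qfin qq (map w [k..<m]) (prefix (m - k) ?b) * strip_coeff qq w b k
        = qfin qq (map w [Suc k..<m]) (prefix (m - Suc k) (strip w b (Suc k))) * strip_coeff qq w b (Suc k)"
      by (simp only: ac_simps)
    also have "\<dots> = (if \<forall>i. Suc k \<le> i \<and> i < m \<longrightarrow> contains (w i) (strip w b i) \<and> first_occ (w i) (strip w b i) + i < m
        then strip_coeff qq w b m else 0)"
      by (rule step.IH)
    also have "(\<forall>i. Suc k \<le> i \<and> i < m \<longrightarrow> contains (w i) (strip w b i) \<and> first_occ (w i) (strip w b i) + i < m)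
        \<longleftrightarrow> (\<forall>i. k \<le> i \<and> i < m \<longrightarrow> contains (w i) (strip w b i) \<and> first_occ (w i) (strip w b i) + i < m)"
      using True by (metis Suc_leD le_antisym not_less_eq_eq)
    finally show ?thesis .
  next
    case False
    then have "qfin qq (map w [k..<m]) (prefix (m - k) ?b) = 0"
      using step.hyps by (auto simp: word len set_prefix_Suc_iff)
    moreover have "\<not> (\<forall>i. k \<le> i \<and> i < m \<longrightarrow> contains (w i) (strip w b i) \<and> first_occ (w i) (strip w b i) + i < m)"
      using False step.hyps by auto
    ultimately show ?thesis by (simp only: if_False mult_zero_left)
  qed
qed auto

lemma qfin_prefix_strip:
  "qfin qq (prefix m \<gamma>) (prefix m \<beta>) =
     (if strip_admissible \<gamma> \<beta> m then strip_coeff qq \<gamma> \<beta> m else 0)"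
  using qfin_strip_window[of 0 m qq \<gamma> \<beta>] by (simp add: prefix_def strip_admissible_def)

lemma strip_eventually_shift:
  assumes head: "\<And>k. N \<le> k \<Longrightarrow> strip w b k 0 = w k"
  shows "strip w b N = (shift ^^ N) w" and "N \<le> k \<Longrightarrow> strip_coeff qq w b k = strip_coeff qq w b N"
proof -
  have strip_N: "strip w b (N + i) = (shift ^^ i) (strip w b N)" for i
  proof (induction i)
    case (Suc i)
    have "(shift ^^ i) (strip w b N) 0 = w (N + i)" using head[of "N + i"] Suc.IH by simp
    then show ?case using Suc.IH by (simp add: remove_first_0)
  qed simp
  have "strip w b N i = w (i + N)" for i
  proof -
    have "strip w b N i = strip w b (N + i) 0" by (simp add: strip_N funpow_shift)
    then show ?thesis using head[of "N + i"] by (simp add: add.commute)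
  qed
  then show "strip w b N = (shift ^^ N) w" by (simp add: funpow_shift fun_eq_iff)
  have "strip_coeff qq w b (N + i) = strip_coeff qq w b N" for i
  proof (induction i)
    case (Suc i)
    have "strip w b (N + i) 0 = w (N + i)" by (rule head) simp
    moreover from this have "contains (w (N + i)) (strip w b (N + i))"
      unfolding contains_def by blast
    ultimately show ?case using Suc.IH by (simp add: qone_inf_0)
  qed simp
  then show "N \<le> k \<Longrightarrow> strip_coeff qq w b k = strip_coeff qq w b N"
    using le_Suc_ex by blast
qed

lemma qfin_refl: "qfin qq l l = 1"
  by (induction l) auto

lemma qinf_self: "qinf qq b b = 1"
  unfolding qinf_def by (simp add: qfin_refl)

section \<open>Convergence of the coefficients q(\<gamma>, \<beta>)\<close>

locale q_coeffs =
  fixes d :: nat and qq :: "nat \<Rightarrow> nat \<Rightarrow> complex"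
  assumes q_small: "\<And>i j. i \<in> {1..d} \<Longrightarrow> j \<in> {1..d} \<Longrightarrow> i \<noteq> j \<Longrightarrow> cmod (qq i j) < 1"
begin

definition qnorms :: "real set" where
  "qnorms = insert 0 (\<Union>i\<in>{1..d}. (\<lambda>j. cmod (qq i j)) ` ({1..d} - {i}))"

definition qbound :: real where
  "qbound = Max qnorms"

lemma finite_qnorms: "finite qnorms"
  unfolding qnorms_def by simp

lemma norm_qq_le_qbound:
  assumes "i \<in> {1..d}" "j \<in> {1..d}" "i \<noteq> j"
  shows "cmod (qq i j) \<le> qbound"
proof -
  have "cmod (qq i j) \<in> (\<lambda>j. cmod (qq i j)) ` ({1..d} - {i})" using assms(2,3) by auto
  then have "cmod (qq i j) \<in> qnorms" using assms(1) unfolding qnorms_def by blast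
  then show ?thesis unfolding qbound_def by (rule Max_ge[OF finite_qnorms])
qed

lemma qbound_nonneg: "0 \<le> qbound"
  unfolding qbound_def by (rule Max_ge[OF finite_qnorms]) (simp add: qnorms_def)

lemma qbound_less_1: "qbound < 1"
  unfolding qbound_def using q_small
  by (subst Max_less_iff[OF finite_qnorms]) (auto simp: qnorms_def)

lemma norm_qone_inf_le:
  assumes "j \<in> {1..d}" "b \<in> inf_words d" "contains j b"
  shows "cmod (qone_inf qq j b) \<le> (if b 0 = j then 1 else qbound)"
proof (cases "b 0 = j")
  case False
  have "cmod (qone_inf qq j b) = (\<Prod>i<first_occ j b. cmod (qq j (b i)))"
    by (simp add: qone_inf_def prod_norm)
  also have "\<dots> \<le> (\<Prod>i<first_occ j b. qbound)"
  proof (rule prod_mono)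
    fix i assume "i \<in> {..<first_occ j b}"
    then have "b i \<noteq> j" "b i \<in> {1..d}" using before_first_occ assms(2) by (auto simp: inf_words_def)
    then show "0 \<le> cmod (qq j (b i)) \<and> cmod (qq j (b i)) \<le> qbound"
      using norm_qq_le_qbound assms(1) by auto
  qed
  also have "\<dots> = qbound ^ first_occ j b" by simp
  also have "\<dots> \<le> qbound ^ 1"
  proof -
    have "first_occ j b \<noteq> 0" using False first_occ_in[OF assms(3)] by metis
    then show ?thesis using qbound_nonneg qbound_less_1 by (intro power_decreasing) auto
  qed
  finally show ?thesis using False by simp
qed (simp add: qone_inf_0)

lemma norm_strip_coeff_Suc_le:
  assumes "w \<in> inf_words d" "b \<in> inf_words d"
  shows "cmod (strip_coeff qq w b (Suc k))
           \<le> (if strip w b k 0 = w k then 1 else qbound) * cmod (strip_coeff qq w b k)"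
proof -
  let ?c = "if contains (w k) (strip w b k) then qone_inf qq (w k) (strip w b k) else 0"
  have "w k \<in> {1..d}" using assms(1) by (simp add: inf_words_def)
  then have c: "cmod ?c \<le> (if strip w b k 0 = w k then 1 else qbound)"
  proof (cases "contains (w k) (strip w b k)")
    case True
    with norm_qone_inf_le[OF \<open>w k \<in> {1..d}\<close> inf_words_strip[OF assms(2)] True] show ?thesis by simp
  qed (simp add: qbound_nonneg)
  have "cmod (strip_coeff qq w b (Suc k)) = cmod ?c * cmod (strip_coeff qq w b k)"
    by (simp add: norm_mult)
  also have "\<dots> \<le> (if strip w b k 0 = w k then 1 else qbound) * cmod (strip_coeff qq w b k)"
    using c by (rule mult_right_mono) simp
  finally show ?thesis .
qed

lemma norm_strip_coeff_antimono:
  assumes "w \<in> inf_words d" "b \<in> inf_words d" "k \<le> m"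
  shows "cmod (strip_coeff qq w b m) \<le> cmod (strip_coeff qq w b k)"
  using assms(3)
proof (induction m rule: dec_induct)
  case (step m)
  have "(if strip w b m 0 = w m then 1 else qbound) * cmod (strip_coeff qq w b m)
      \<le> cmod (strip_coeff qq w b m)"
    using qbound_nonneg qbound_less_1 by (intro mult_left_le_one_le) auto
  then show ?case using norm_strip_coeff_Suc_le[OF assms(1,2), of m] step.IH by linarith
qed simp

text \<open>Each letter of w that is not found at the head of what is left of \<beta> costs a factor qbound.\<close>

lemma strip_coeff_tendsto_0:
  assumes "w \<in> inf_words d" "b \<in> inf_words d"
    and infinitely: "\<And>N. \<exists>k\<ge>N. strip w b k 0 \<noteq> w k"
  shows "strip_coeff qq w b \<longlonglongrightarrow> 0"
proof -
  have small: "\<exists>m. cmod (strip_coeff qq w b m) \<le> qbound ^ p" for p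
  proof (induction p)
    case (Suc p)
    then obtain m where m: "cmod (strip_coeff qq w b m) \<le> qbound ^ p" by blast
    obtain k where k: "m \<le> k" "strip w b k 0 \<noteq> w k" using infinitely by blast
    have "cmod (strip_coeff qq w b (Suc k)) \<le> qbound * cmod (strip_coeff qq w b k)"
      using norm_strip_coeff_Suc_le[OF assms(1,2), of k] k(2) by simp
    also have "\<dots> \<le> qbound * qbound ^ p"
      using norm_strip_coeff_antimono[OF assms(1,2) k(1)] m qbound_nonneg
      by (intro mult_left_mono) auto
    finally show ?case unfolding power_Suc by blast
  qed (auto intro: exI[of _ 0])
  show ?thesis
  proof (rule LIMSEQ_I)
    fix r :: real assume "0 < r"
    then obtain p where p: "qbound ^ p < r" using real_arch_pow_inv qbound_less_1 by blast
    obtain m where "cmod (strip_coeff qq w b m) \<le> qbound ^ p" using small by blast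
    then have "norm (strip_coeff qq w b n - 0) < r" if "m \<le> n" for n
      using norm_strip_coeff_antimono[OF assms(1,2) that] p by simp
    then show "\<exists>m. \<forall>n\<ge>m. norm (strip_coeff qq w b n - 0) < r" by blast
  qed
qed

lemma strip_dichotomy:
  assumes "w \<in> inf_words d" "b \<in> inf_words d"
  obtains N where "\<And>k. N \<le> k \<Longrightarrow> strip w b k 0 = w k"
    | "strip_coeff qq w b \<longlonglongrightarrow> 0"
proof (cases "\<forall>N. \<exists>k\<ge>N. strip w b k 0 \<noteq> w k")
  case True then show ?thesis using that(2) strip_coeff_tendsto_0[OF assms] by blast
next
  case False then show ?thesis using that(1) by blast
qed

lemma qfin_prefix_convergent:
  assumes w: "w \<in> inf_words d" and b: "b \<in> inf_words d"
  shows "convergent (\<lambda>m. qfin qq (prefix m w) (prefix m b))"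
proof -
  let ?f = "\<lambda>m. qfin qq (prefix m w) (prefix m b)"
  from strip_dichotomy[OF w b] show ?thesis
  proof cases
    case (1 N)
    define C where "C \<longleftrightarrow> (\<forall>i<N. contains (w i) (strip w b i))"
    define B where "B = Suc (\<Sum>i<N. first_occ (w i) (strip w b i) + i)"
    have early: "first_occ (w i) (strip w b i) + i < B" if "i < N" for i
    proof -
      have "first_occ (w i) (strip w b i) + i \<le> (\<Sum>i<N. first_occ (w i) (strip w b i) + i)"
        using that by (intro member_le_sum) auto
      then show ?thesis unfolding B_def by linarith
    qed
    have late: "contains (w i) (strip w b i) \<and> first_occ (w i) (strip w b i) = 0" if "N \<le> i" for i
      using 1 that contains_first_occ_0_iff by blast
    have "?f m = (if C then strip_coeff qq w b N else 0)" if m: "N + B \<le> m" for m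
    proof -
      have "strip_admissible w b m \<longleftrightarrow> C"
      proof
        assume "strip_admissible w b m"
        then show C using m unfolding strip_admissible_def C_def by auto
      next
        assume C
        have "contains (w i) (strip w b i) \<and> first_occ (w i) (strip w b i) + i < m" if "i < m" for i
        proof (cases "i < N")
          case True then show ?thesis using \<open>C\<close> early[OF True] m unfolding C_def by auto
        next
          case False then show ?thesis using late[of i] \<open>i < m\<close> by auto
        qed
        then show "strip_admissible w b m" unfolding strip_admissible_def by blast
      qed
      then show ?thesis
        using qfin_prefix_strip strip_eventually_shift(2)[OF 1, where k=m] m by simp
    qed
    then have "\<forall>\<^sub>F m in sequentially. ?f m = (if C then strip_coeff qq w b N else 0)"
      unfolding eventually_sequentially by blast
    then have "?f \<longlonglongrightarrow> (if C then strip_coeff qq w b N else 0)" by (rule tendsto_eventually)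
    then show ?thesis by (auto simp: convergent_def)
  next
    case 2
    have bound: "norm (?f m) \<le> cmod (strip_coeff qq w b m)" for m
      by (simp add: qfin_prefix_strip)
    have "(\<lambda>m. cmod (strip_coeff qq w b m)) \<longlonglongrightarrow> 0"
      using 2 by (simp add: tendsto_norm_zero)
    then have "?f \<longlonglongrightarrow> 0" by (rule Lim_null_comparison[rotated]) (simp add: bound)
    then show ?thesis by (auto simp: convergent_def)
  qed
qed

lemma qinf_shift_in:
  assumes \<gamma>: "\<gamma> \<in> inf_words d" and \<beta>: "\<beta> \<in> inf_words d"
  shows "qinf qq (shift_in j \<gamma>) \<beta> =
     (if contains j \<beta> then qone_inf qq j \<beta> * qinf qq \<gamma> (remove_first j \<beta>) else 0)"
proof -
  let ?f = "\<lambda>m. qfin qq (prefix m (shift_in j \<gamma>)) (prefix m \<beta>)"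
  have f_Suc: "?f (Suc m) = (if j \<in> set (prefix (Suc m) \<beta>) then qone qq j (prefix (Suc m) \<beta>) *
        qfin qq (prefix m \<gamma>) (remove1 j (prefix (Suc m) \<beta>)) else 0)" for m
    by (simp only: prefix_shift_in qfin.simps)
  show ?thesis
  proof (cases "contains j \<beta>")
    case True
    let ?g = "\<lambda>m. qfin qq (prefix m \<gamma>) (prefix m (remove_first j \<beta>))"
    have "convergent ?g" by (rule qfin_prefix_convergent[OF \<gamma> inf_words_remove_first[OF \<beta>]])
    have f_g: "?f (Suc m) = qone_inf qq j \<beta> * ?g m" if "first_occ j \<beta> \<le> m" for m
      using f_Suc[of m] True that by (simp add: set_prefix_Suc_iff qone_prefix_Suc remove1_prefix_Suc)
    from \<open>convergent ?g\<close> have "(\<lambda>m. qone_inf qq j \<beta> * ?g m) \<longlonglongrightarrow> qone_inf qq j \<beta> * lim ?g"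
      by (intro tendsto_mult_left) (simp add: convergent_LIMSEQ_iff)
    moreover have "\<forall>\<^sub>F m in sequentially. qone_inf qq j \<beta> * ?g m = ?f (Suc m)"
      unfolding eventually_sequentially by (intro exI[of _ "first_occ j \<beta>"]) (simp add: f_g)
    ultimately have "(\<lambda>m. ?f (Suc m)) \<longlonglongrightarrow> qone_inf qq j \<beta> * lim ?g"
      by (rule Lim_transform_eventually)
    then have "?f \<longlonglongrightarrow> qone_inf qq j \<beta> * lim ?g" by (rule LIMSEQ_imp_Suc)
    then show ?thesis using True unfolding qinf_def by (simp add: limI)
  next
    case False
    then have "?f (Suc m) = 0" for m using f_Suc[of m] by (simp add: set_prefix_Suc_iff)
    then have "(\<lambda>m. ?f (Suc m)) \<longlonglongrightarrow> 0" by simp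
    then have "?f \<longlonglongrightarrow> 0" by (rule LIMSEQ_imp_Suc)
    then show ?thesis using False unfolding qinf_def by (simp add: limI)
  qed
qed

end

section \<open>The representation on the orbit of \<alpha>\<close>

definition prepend :: "(nat \<Rightarrow> nat) \<Rightarrow> nat \<Rightarrow> (nat \<Rightarrow> nat) \<Rightarrow> nat \<Rightarrow> nat" where
  "prepend w n \<delta> = (\<lambda>i. if i < n then w i else \<delta> (i - n))"

lemma prepend_0 [simp]: "prepend w 0 \<delta> = \<delta>"
  by (simp add: prepend_def)

lemma prepend_shift_in: "prepend w n (shift_in (w n) \<delta>) = prepend w (Suc n) \<delta>"
  unfolding prepend_def shift_in_def by (rule ext) (auto simp: less_Suc_eq)

lemma prepend_funpow_shift: "prepend w n ((shift ^^ n) w) = w"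
  unfolding prepend_def funpow_shift by (rule ext) auto

lemma strip_self: "strip w w n = (shift ^^ n) w \<and> strip_coeff qq w w n = 1"
proof (induction n)
  case (Suc n)
  have "(shift ^^ n) w 0 = w n" by (simp add: funpow_shift)
  moreover from this have "contains (w n) ((shift ^^ n) w)" unfolding contains_def by blast
  ultimately show ?case using Suc by (simp add: remove_first_0 qone_inf_0)
qed simp

locale word_representation = q_coeffs d qq + complex_hilbert J
  for d qq and J :: "'h::{real_inner,complete_space} \<Rightarrow> 'h" +
  fixes \<alpha> :: "nat \<Rightarrow> nat" and e :: "(nat \<Rightarrow> nat) \<Rightarrow> 'h" and S T :: "nat \<Rightarrow> 'h \<Rightarrow> 'h"
  assumes alpha: "\<alpha> \<in> inf_words d"
    and e_inner: "\<And>\<beta> \<gamma>. \<beta> \<in> inf_words d \<Longrightarrow> tail_equiv \<beta> \<alpha> \<Longrightarrow>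
                    \<gamma> \<in> inf_words d \<Longrightarrow> tail_equiv \<gamma> \<alpha> \<Longrightarrow>
                    cinner J (e \<beta>) (e \<gamma>) = qinf qq \<gamma> \<beta>"
    and e_dense: "closure (cspan J (e ` {\<beta> \<in> inf_words d. tail_equiv \<beta> \<alpha>})) = UNIV"
    and S_clinear: "\<And>j. j \<in> {1..d} \<Longrightarrow> bounded_clinear J (S j)"
    and T_clinear: "\<And>j. j \<in> {1..d} \<Longrightarrow> bounded_clinear J (T j)"
    and S_e: "\<And>j \<beta>. j \<in> {1..d} \<Longrightarrow> \<beta> \<in> inf_words d \<Longrightarrow> tail_equiv \<beta> \<alpha> \<Longrightarrow>
                S j (e \<beta>) = e (shift_in j \<beta>)"
    and T_e: "\<And>j \<beta>. j \<in> {1..d} \<Longrightarrow> \<beta> \<in> inf_words d \<Longrightarrow> tail_equiv \<beta> \<alpha> \<Longrightarrow>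
                T j (e \<beta>) = (if contains j \<beta>
                              then cscale J (qone_inf qq j \<beta>) (e (remove_first j \<beta>))
                              else 0)"
begin

definition orbit :: "(nat \<Rightarrow> nat) set" where
  "orbit = {\<beta> \<in> inf_words d. tail_equiv \<beta> \<alpha>}"

lemma alpha_in_orbit: "\<alpha> \<in> orbit"
  using alpha by (auto simp: orbit_def tail_equiv_def)

lemma alpha_letter: "\<alpha> n \<in> {1..d}"
  using alpha by (simp add: inf_words_def)

lemma orbit_shift_in: "j \<in> {1..d} \<Longrightarrow> \<beta> \<in> orbit \<Longrightarrow> shift_in j \<beta> \<in> orbit"
  by (simp add: orbit_def inf_words_shift_in tail_equiv_shift_in)

lemma orbit_funpow_shift: "\<beta> \<in> orbit \<Longrightarrow> (shift ^^ k) \<beta> \<in> orbit"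
  by (simp add: orbit_def inf_words_funpow_shift tail_equiv_funpow_shift)

lemma orbit_remove_first: "\<beta> \<in> orbit \<Longrightarrow> remove_first j \<beta> \<in> orbit"
  by (simp add: orbit_def inf_words_remove_first tail_equiv_remove_first)

lemma orbit_strip: "\<beta> \<in> orbit \<Longrightarrow> strip w \<beta> k \<in> orbit"
  by (simp add: orbit_def inf_words_strip tail_equiv_strip)

lemma orbit_prepend: "\<delta> \<in> orbit \<Longrightarrow> prepend \<alpha> n \<delta> \<in> orbit"
proof (induction n arbitrary: \<delta>)
  case (Suc n)
  show ?case using Suc.IH[OF orbit_shift_in[OF alpha_letter[of n] Suc.prems]] by (simp add: prepend_shift_in)
qed simp

lemma cinner_e: "\<beta> \<in> orbit \<Longrightarrow> \<gamma> \<in> orbit \<Longrightarrow> cinner J (e \<beta>) (e \<gamma>) = qinf qq \<gamma> \<beta>"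
  using e_inner by (simp add: orbit_def)

lemma norm_e: "\<gamma> \<in> orbit \<Longrightarrow> norm (e \<gamma>) = 1"
  using arg_cong[OF cinner_e[of \<gamma> \<gamma>], of Re] by (simp add: qinf_self norm_eq_sqrt_inner)

lemma S_e_orbit: "j \<in> {1..d} \<Longrightarrow> \<beta> \<in> orbit \<Longrightarrow> S j (e \<beta>) = e (shift_in j \<beta>)"
  using S_e by (simp add: orbit_def)

lemma T_e_orbit: "j \<in> {1..d} \<Longrightarrow> \<beta> \<in> orbit \<Longrightarrow>
    T j (e \<beta>) = (if contains j \<beta> then cscale J (qone_inf qq j \<beta>) (e (remove_first j \<beta>)) else 0)"
  using T_e by (simp add: orbit_def)

lemma S_bounded_linear: "j \<in> {1..d} \<Longrightarrow> bounded_linear (S j)"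
  and T_bounded_linear: "j \<in> {1..d} \<Longrightarrow> bounded_linear (T j)"
  and S_J: "j \<in> {1..d} \<Longrightarrow> S j (J x) = J (S j x)"
  and T_J: "j \<in> {1..d} \<Longrightarrow> T j (J x) = J (T j x)"
  using S_clinear T_clinear by (simp_all add: bounded_clinear_def)

lemma bounded_linear_eq_on_orbit:
  fixes f g :: "'h \<Rightarrow> real"
  assumes "bounded_linear f" "bounded_linear g"
    and "\<And>\<gamma>. \<gamma> \<in> orbit \<Longrightarrow> f (e \<gamma>) = g (e \<gamma>)" "\<And>\<gamma>. \<gamma> \<in> orbit \<Longrightarrow> f (J (e \<gamma>)) = g (J (e \<gamma>))"
  shows "f = g"
proof -
  have P: "subspace {y. f y = g y} \<and> closed {y. f y = g y}" by (rule closed_subspace_Collect_eq[OF assms(1,2)])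
  then have "cspan J (e ` orbit) \<subseteq> {y. f y = g y}"
    unfolding cspan_def using assms(3,4) by (intro span_minimal) auto
  then have "closure (cspan J (e ` orbit)) \<subseteq> {y. f y = g y}"
    using P by (intro closure_minimal) auto
  then show ?thesis using e_dense unfolding orbit_def by auto
qed

lemma cinner_T_e_e:
  assumes j: "j \<in> {1..d}" and \<beta>: "\<beta> \<in> orbit" and \<gamma>: "\<gamma> \<in> orbit"
  shows "cinner J (T j (e \<beta>)) (e \<gamma>) = cinner J (e \<beta>) (S j (e \<gamma>))"
proof -
  have "cinner J (e \<beta>) (S j (e \<gamma>)) = qinf qq (shift_in j \<gamma>) \<beta>"
    using S_e_orbit[OF j \<gamma>] cinner_e[OF \<beta> orbit_shift_in[OF j \<gamma>]] by simp
  also have "\<dots> = (if contains j \<beta> then qone_inf qq j \<beta> * qinf qq \<gamma> (remove_first j \<beta>) else 0)"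
    using \<beta> \<gamma> by (simp add: orbit_def qinf_shift_in)
  also have "\<dots> = cinner J (T j (e \<beta>)) (e \<gamma>)"
    using T_e_orbit[OF j \<beta>] cinner_e[OF orbit_remove_first[OF \<beta>] \<gamma>] by (simp add: cinner_cscale_left)
  finally show ?thesis by simp
qed

lemma inner_T_S:
  assumes j: "j \<in> {1..d}"
  shows "inner (T j x) y = inner x (S j y)"
proof -
  have on_e: "inner (T j (e \<beta>)) y = inner (e \<beta>) (S j y)" if \<beta>: "\<beta> \<in> orbit" for \<beta> y
  proof -
    have "(\<lambda>y. inner (T j (e \<beta>)) y) = (\<lambda>y. inner (e \<beta>) (S j y))"
    proof (rule bounded_linear_eq_on_orbit)
      show "bounded_linear (\<lambda>y. inner (e \<beta>) (S j y))"
        using bounded_linear_compose[OF bounded_linear_inner_right S_bounded_linear[OF j]] by (simp add: o_def)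
      fix \<gamma> assume \<gamma>: "\<gamma> \<in> orbit"
      from cinner_T_e_e[OF j \<beta> \<gamma>]
      show "inner (T j (e \<beta>)) (e \<gamma>) = inner (e \<beta>) (S j (e \<gamma>))"
        and "inner (T j (e \<beta>)) (J (e \<gamma>)) = inner (e \<beta>) (S j (J (e \<gamma>)))"
        by (simp_all add: complex_eq_iff S_J[OF j])
    qed (rule bounded_linear_inner_right)
    from fun_cong[OF this, of y] show ?thesis .
  qed
  have "(\<lambda>x. inner (T j x) y) = (\<lambda>x. inner x (S j y))"
  proof (rule bounded_linear_eq_on_orbit)
    show "bounded_linear (\<lambda>x. inner (T j x) y)"
      using bounded_linear_compose[OF bounded_linear_inner_left T_bounded_linear[OF j]] by (simp add: o_def)
    fix \<beta> assume \<beta>: "\<beta> \<in> orbit"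
    show "inner (T j (e \<beta>)) y = inner (e \<beta>) (S j y)" by (rule on_e[OF \<beta>])
    show "inner (T j (J (e \<beta>))) y = inner (J (e \<beta>)) (S j y)"
      using on_e[OF \<beta>, of "J y"] by (simp add: T_J[OF j] S_J[OF j] inner_J_left)
  qed (rule bounded_linear_inner_left)
  from fun_cong[OF this, of x] show ?thesis .
qed

primrec S_prefix :: "nat \<Rightarrow> 'h \<Rightarrow> 'h" where
  "S_prefix 0 = id"
| "S_prefix (Suc n) = S_prefix n \<circ> S (\<alpha> n)"

primrec T_prefix :: "nat \<Rightarrow> 'h \<Rightarrow> 'h" where
  "T_prefix 0 = id"
| "T_prefix (Suc n) = T (\<alpha> n) \<circ> T_prefix n"

lemma S_prefix_clinear: "bounded_clinear J (S_prefix n)"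
  and T_prefix_clinear: "bounded_clinear J (T_prefix n)"
  by (induction n)
    (simp_all add: bounded_clinear_id bounded_clinear_comp S_clinear[OF alpha_letter] T_clinear[OF alpha_letter])

lemma inner_T_prefix: "inner (T_prefix n x) y = inner x (S_prefix n y)"
  by (induction n arbitrary: y) (simp_all add: inner_T_S[OF alpha_letter])

lemma T_prefix_e:
  "\<gamma> \<in> orbit \<Longrightarrow> T_prefix n (e \<gamma>) = cscale J (strip_coeff qq \<alpha> \<gamma> n) (e (strip \<alpha> \<gamma> n))"
proof (induction n)
  case (Suc n)
  have "T_prefix (Suc n) (e \<gamma>) = T (\<alpha> n) (cscale J (strip_coeff qq \<alpha> \<gamma> n) (e (strip \<alpha> \<gamma> n)))"
    using Suc by simp
  also have "\<dots> = cscale J (strip_coeff qq \<alpha> \<gamma> n) (T (\<alpha> n) (e (strip \<alpha> \<gamma> n)))"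
    by (rule bounded_clinear_cscale[OF T_clinear[OF alpha_letter]])
  also have "\<dots> = cscale J (strip_coeff qq \<alpha> \<gamma> (Suc n)) (e (strip \<alpha> \<gamma> (Suc n)))"
    using T_e_orbit[OF alpha_letter orbit_strip[OF Suc.prems]] by (simp add: cscale_cscale)
  finally show ?case .
qed simp

lemma S_prefix_e: "\<delta> \<in> orbit \<Longrightarrow> S_prefix n (e \<delta>) = e (prepend \<alpha> n \<delta>)"
proof (induction n arbitrary: \<delta>)
  case (Suc n)
  then show ?case
    using S_e_orbit[OF alpha_letter Suc.prems] Suc.IH[OF orbit_shift_in[OF alpha_letter Suc.prems]]
    by (simp add: prepend_shift_in)
qed simp

lemma T_prefix_e_alpha: "T_prefix n (e \<alpha>) = e ((shift ^^ n) \<alpha>)"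
  using T_prefix_e[OF alpha_in_orbit, of n] strip_self[of \<alpha> n qq] by simp

lemma S_T_prefix_e_alpha: "S_prefix n (T_prefix n (e \<alpha>)) = e \<alpha>"
  using S_prefix_e[OF orbit_funpow_shift[OF alpha_in_orbit]] by (simp add: T_prefix_e_alpha prepend_funpow_shift)

lemma cinner_S_T_prefix:
  "cinner J (S_prefix n (T_prefix n y)) z = cinner J y (S_prefix n (T_prefix n z))"
proof (rule cinner_adjoint)
  show "inner (S_prefix n (T_prefix n x)) y = inner x (S_prefix n (T_prefix n y))" for x y
  proof -
    have "inner (S_prefix n (T_prefix n x)) y = inner y (S_prefix n (T_prefix n x))"
      by (rule inner_commute)
    also have "\<dots> = inner (T_prefix n y) (T_prefix n x)" by (rule inner_T_prefix[symmetric])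
    also have "\<dots> = inner (T_prefix n x) (T_prefix n y)" by (rule inner_commute)
    also have "\<dots> = inner x (S_prefix n (T_prefix n y))" by (rule inner_T_prefix)
    finally show ?thesis .
  qed
  show "S_prefix n (T_prefix n (J x)) = J (S_prefix n (T_prefix n x))" for x
    using S_prefix_clinear T_prefix_clinear by (simp add: bounded_clinear_def)
qed

lemma cinner_fixed_e_strip:
  assumes fixed: "\<And>n. S_prefix n (T_prefix n y) = y" and \<gamma>: "\<gamma> \<in> orbit"
  shows "cinner J y (e \<gamma>) = cnj (strip_coeff qq \<alpha> \<gamma> n) * cinner J y (e (prepend \<alpha> n (strip \<alpha> \<gamma> n)))"
proof -
  have "cinner J y (e \<gamma>) = cinner J y (S_prefix n (T_prefix n (e \<gamma>)))"
    using cinner_S_T_prefix[of n y] fixed by simp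
  also have "S_prefix n (T_prefix n (e \<gamma>)) = cscale J (strip_coeff qq \<alpha> \<gamma> n) (e (prepend \<alpha> n (strip \<alpha> \<gamma> n)))"
    using T_prefix_e[OF \<gamma>] bounded_clinear_cscale[OF S_prefix_clinear] S_prefix_e[OF orbit_strip[OF \<gamma>]]
    by simp
  finally show ?thesis by (simp add: cinner_cscale_right)
qed

lemma cinner_fixed_e_eq_product:
  assumes fixed: "\<And>n. S_prefix n (T_prefix n y) = y" and \<gamma>: "\<gamma> \<in> orbit"
  shows "cinner J y (e \<gamma>) = cinner J y (e \<alpha>) * cinner J (e \<alpha>) (e \<gamma>)"
proof -
  have e_fixed: "\<And>n. S_prefix n (T_prefix n (e \<alpha>)) = e \<alpha>" by (rule S_T_prefix_e_alpha)
  have "\<gamma> \<in> inf_words d" using \<gamma> by (simp add: orbit_def)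
  from strip_dichotomy[OF alpha this] show ?thesis
  proof cases
    case (1 N)
    then have "prepend \<alpha> N (strip \<alpha> \<gamma> N) = \<alpha>"
      using strip_eventually_shift(1)[OF 1] prepend_funpow_shift by simp
    then have "cinner J y' (e \<gamma>) = cnj (strip_coeff qq \<alpha> \<gamma> N) * cinner J y' (e \<alpha>)"
      if "\<And>n. S_prefix n (T_prefix n y') = y'" for y'
      using cinner_fixed_e_strip[OF that \<gamma>, of N] by simp
    from this[OF fixed] this[OF e_fixed] show ?thesis
      using cinner_e[OF alpha_in_orbit alpha_in_orbit] by (simp add: qinf_self)
  next
    case 2
    have "cinner J y' (e \<gamma>) = 0" if fixed': "\<And>n. S_prefix n (T_prefix n y') = y'" for y'
    proof -
      have bound: "cmod (cinner J y' (e \<gamma>)) \<le> cmod (strip_coeff qq \<alpha> \<gamma> n) * (2 * norm y')" for n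
        using cinner_fixed_e_strip[OF fixed' \<gamma>, of n] norm_cinner_le[of y' "e (prepend \<alpha> n (strip \<alpha> \<gamma> n))"]
          norm_e[OF orbit_prepend[OF orbit_strip[OF \<gamma>]]]
        by (simp add: norm_mult mult_left_mono)
      have "(\<lambda>n. cmod (strip_coeff qq \<alpha> \<gamma> n) * (2 * norm y')) \<longlonglongrightarrow> 0"
        using 2 by (simp add: tendsto_mult_left_zero tendsto_norm_zero)
      then have "cmod (cinner J y' (e \<gamma>)) \<le> 0"
        by (rule LIMSEQ_le_const) (use bound in blast)
      then show ?thesis by simp
    qed
    from this[OF fixed] this[OF e_fixed] show ?thesis by simp
  qed
qed

lemma fixed_eq_multiple_e_alpha:
  assumes fixed: "\<And>n. S_prefix n (T_prefix n y) = y"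
  shows "y = cscale J (cinner J y (e \<alpha>)) (e \<alpha>)"
proof -
  define z where "z = y - cscale J (cinner J y (e \<alpha>)) (e \<alpha>)"
  have z: "cinner J z (e \<gamma>) = 0" if "\<gamma> \<in> orbit" for \<gamma>
    unfolding z_def using cinner_fixed_e_eq_product[OF fixed that] by (simp add: cinner_diff_left cinner_cscale_left)
  have "(\<lambda>w. inner z w) = (\<lambda>w. 0)"
    using z by (intro bounded_linear_eq_on_orbit bounded_linear_inner_right bounded_linear_zero)
      (simp_all add: complex_eq_iff)
  from fun_cong[OF this, of z] have "inner z z = 0" .
  then show ?thesis unfolding z_def by simp
qed

definition invariant_subspace :: "'h set \<Rightarrow> bool" where
  "invariant_subspace K \<longleftrightarrow> closed_csubspace J K \<and> (\<forall>j\<in>{1..d}. S j ` K \<subseteq> K \<and> T j ` K \<subseteq> K)"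

lemma invariant_subspace_orthogonal_comp:
  assumes "invariant_subspace K" shows "invariant_subspace (K\<^sup>\<bottom>)"
proof -
  have "S j ` (K\<^sup>\<bottom>) \<subseteq> K\<^sup>\<bottom> \<and> T j ` (K\<^sup>\<bottom>) \<subseteq> K\<^sup>\<bottom>" if j: "j \<in> {1..d}" for j
  proof
    show "S j ` (K\<^sup>\<bottom>) \<subseteq> K\<^sup>\<bottom>"
      using assms j inner_T_S[OF j] unfolding invariant_subspace_def
      by (intro adjoint_maps_orthogonal_comp[of "T j"]) auto
    have "inner (S j x) y = inner x (T j y)" for x y
      using inner_T_S[OF j, of y x] by (simp add: inner_commute)
    then show "T j ` (K\<^sup>\<bottom>) \<subseteq> K\<^sup>\<bottom>"
      using assms j unfolding invariant_subspace_def
      by (intro adjoint_maps_orthogonal_comp[of "S j"]) auto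
  qed
  then show ?thesis
    using assms orthogonal_comp_J
    by (simp add: invariant_subspace_def closed_csubspace_def subspace_orthogonal_comp closed_orthogonal_comp)
qed

lemma invariant_subspace_prefix:
  assumes "invariant_subspace K" "x \<in> K"
  shows "S_prefix n x \<in> K" and "T_prefix n x \<in> K"
proof -
  have S: "S (\<alpha> k) ` K \<subseteq> K" and T: "T (\<alpha> k) ` K \<subseteq> K" for k
    using assms(1) alpha_letter unfolding invariant_subspace_def by blast+
  show "S_prefix n x \<in> K" using assms(2) S by (induction n arbitrary: x) auto
  show "T_prefix n x \<in> K" using assms(2) T by (induction n) auto
qed

lemma invariant_subspace_e_alpha:
  assumes inv: "invariant_subspace K" and "e \<alpha> \<in> K"
  shows "K = UNIV"
proof -
  have sub: "subspace K" "closed K" "J ` K \<subseteq> K" and S: "\<And>j. j \<in> {1..d} \<Longrightarrow> S j ` K \<subseteq> K"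
    using inv unfolding invariant_subspace_def closed_csubspace_def by auto
  have tails: "e ((shift ^^ n) \<alpha>) \<in> K" for n
    using invariant_subspace_prefix(2)[OF inv \<open>e \<alpha> \<in> K\<close>, of n] by (simp add: T_prefix_e_alpha)
  have eK: "e \<gamma> \<in> K" if \<gamma>: "\<gamma> \<in> orbit" for \<gamma>
  proof -
    obtain m n where mn: "(shift ^^ m) \<gamma> = (shift ^^ n) \<alpha>"
      using \<gamma> unfolding orbit_def tail_equiv_def by blast
    have "e ((shift ^^ k) \<gamma>) \<in> K" if "k \<le> m" for k
      using that
    proof (induction k rule: inc_induct)
      case (step k)
      have "\<gamma> k \<in> {1..d}" using \<gamma> unfolding orbit_def inf_words_def by blast
      then have "S (\<gamma> k) (e ((shift ^^ Suc k) \<gamma>)) \<in> K" using S step.IH by blast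
      then show ?case
        using S_e_orbit[OF \<open>\<gamma> k \<in> {1..d}\<close> orbit_funpow_shift[OF \<gamma>, of "Suc k"]]
        by (simp only: shift_in_funpow_shift)
    qed (simp add: mn tails)
    from this[of 0] show ?thesis by simp
  qed
  have "cspan J (e ` orbit) \<subseteq> K"
    unfolding cspan_def using sub eK by (intro span_minimal) auto
  then have "closure (cspan J (e ` orbit)) \<subseteq> K" using sub by (intro closure_minimal)
  then show ?thesis using e_dense unfolding orbit_def by auto
qed

lemma invariant_subspace_component_fixed:
  assumes inv: "invariant_subspace K" and a: "a \<in> K" "e \<alpha> - a \<in> K\<^sup>\<bottom>"
  shows "S_prefix n (T_prefix n a) = a"
proof -
  let ?V = "S_prefix n \<circ> T_prefix n"
  have "bounded_clinear J ?V" by (rule bounded_clinear_comp[OF S_prefix_clinear T_prefix_clinear])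
  then have "linear ?V" by (simp add: bounded_clinear_def bounded_linear.linear)
  from linear_add[OF this, of a "e \<alpha> - a"] have "?V a + ?V (e \<alpha> - a) = ?V (e \<alpha>)" by simp
  then have "?V a + ?V (e \<alpha> - a) = a + (e \<alpha> - a)" using S_T_prefix_e_alpha by simp
  moreover have "?V a \<in> K" "?V (e \<alpha> - a) \<in> K\<^sup>\<bottom>"
    using invariant_subspace_prefix(1)[OF inv invariant_subspace_prefix(2)[OF inv a(1)]]
      invariant_subspace_prefix(1)[OF invariant_subspace_orthogonal_comp[OF inv]
        invariant_subspace_prefix(2)[OF invariant_subspace_orthogonal_comp[OF inv] a(2)]]
    by simp_all
  moreover have "subspace K" using inv by (simp add: invariant_subspace_def closed_csubspace_def)
  ultimately have "?V a = a" using orthogonal_decomposition_unique a by blast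
  then show ?thesis by simp
qed

theorem invariant_subspace_trivial:
  assumes inv: "invariant_subspace K"
  shows "K = {0} \<or> K = UNIV"
proof -
  have sub: "subspace K" "closed K" "J ` K \<subseteq> K"
    using inv unfolding invariant_subspace_def closed_csubspace_def by auto
  obtain a where a: "a \<in> K" "e \<alpha> - a \<in> K\<^sup>\<bottom>" using orthogonal_decomposition[OF sub(1,2)] .
  define c where "c = cinner J a (e \<alpha>)"
  have ac: "a = cscale J c (e \<alpha>)"
    unfolding c_def by (rule fixed_eq_multiple_e_alpha[OF invariant_subspace_component_fixed[OF inv a]])
  show ?thesis
  proof (cases "c = 0")
    case True
    then have "e \<alpha> \<in> K\<^sup>\<bottom>" using a(2) ac by simp
    then have "K\<^sup>\<bottom> = UNIV"
      by (rule invariant_subspace_e_alpha[OF invariant_subspace_orthogonal_comp[OF inv]])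
    then show ?thesis using orthogonal_Int_0[OF sub(1)] by auto
  next
    case False
    then have "e \<alpha> = cscale J (inverse c) a" by (simp add: ac cscale_cscale)
    then have "e \<alpha> \<in> K" using subspace_cscale[OF sub(1,3) a(1)] by simp
    then show ?thesis using invariant_subspace_e_alpha[OF inv] by simp
  qed
qed

end

theorem mainTheorem4:
  fixes d :: nat and qq :: "nat \<Rightarrow> nat \<Rightarrow> complex"
    and \<alpha> :: "nat \<Rightarrow> nat"
    and J :: "'h::{real_inner,complete_space} \<Rightarrow> 'h"
    and e :: "(nat \<Rightarrow> nat) \<Rightarrow> 'h"
    and S T :: "nat \<Rightarrow> 'h \<Rightarrow> 'h"
  assumes d: "d \<ge> 2"
    and q_small: "\<And>i j. i \<in> {1..d} \<Longrightarrow> j \<in> {1..d} \<Longrightarrow> i \<noteq> j \<Longrightarrow> cmod (qq i j) < 1"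
    and q_conj: "\<And>i j. i \<in> {1..d} \<Longrightarrow> j \<in> {1..d} \<Longrightarrow> i \<noteq> j \<Longrightarrow> qq i j = cnj (qq j i)"
    and \<alpha>: "\<alpha> \<in> inf_words d"
    and J: "complex_structure J"
    and e_inner: "\<And>\<beta> \<gamma>. \<beta> \<in> inf_words d \<Longrightarrow> tail_equiv \<beta> \<alpha> \<Longrightarrow>
                    \<gamma> \<in> inf_words d \<Longrightarrow> tail_equiv \<gamma> \<alpha> \<Longrightarrow>
                    cinner J (e \<beta>) (e \<gamma>) = qinf qq \<gamma> \<beta>"
    and e_dense: "closure (cspan J (e ` {\<beta> \<in> inf_words d. tail_equiv \<beta> \<alpha>})) = UNIV"
    and S_lin: "\<And>j. j \<in> {1..d} \<Longrightarrow> bounded_clinear J (S j)"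
    and T_lin: "\<And>j. j \<in> {1..d} \<Longrightarrow> bounded_clinear J (T j)"
    and S_e: "\<And>j \<beta>. j \<in> {1..d} \<Longrightarrow> \<beta> \<in> inf_words d \<Longrightarrow> tail_equiv \<beta> \<alpha> \<Longrightarrow>
                S j (e \<beta>) = e (shift_in j \<beta>)"
    and T_e: "\<And>j \<beta>. j \<in> {1..d} \<Longrightarrow> \<beta> \<in> inf_words d \<Longrightarrow> tail_equiv \<beta> \<alpha> \<Longrightarrow>
                T j (e \<beta>) = (if contains j \<beta>
                              then cscale J (qone_inf qq j \<beta>) (e (remove_first j \<beta>))
                              else 0)"
  shows "\<forall>K. closed_csubspace J K \<and> (\<forall>j\<in>{1..d}. S j ` K \<subseteq> K \<and> T j ` K \<subseteq> K)
             \<longrightarrow> K = {0} \<or> K = UNIV"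
proof -
  interpret word_representation d qq J \<alpha> e S T
    by unfold_locales (fact q_small J \<alpha> e_inner e_dense S_lin T_lin S_e T_e)+
  show ?thesis using invariant_subspace_trivial by (simp add: invariant_subspace_def)
qed

end
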